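(* Let $\psi,\chi,\theta>0$ and $q\in(0,1)$. Let $N$ be mixed Poisson, $N\sim\mathrm{Poisson}(\Lambda)$ with $\Lambda\sim\mathrm{GIG}(\psi,\chi,\theta)$, and let $X_1,X_2,\dots$ be independent copies of $X\sim\mathrm{Geo}(1,q)$, independent of $N$; let $L=X_1+\dots+X_N$. Then $a_n=\mathbb{P}[L=n]$ satisfies \[ a_n\sim C\,\chi^{-\theta/2}D^{-\theta}(2n)^{\theta-1}z_1^{-n}\qquad(n\to\infty), \] where \[ C=\frac{\psi^{\theta/2}}{K_\theta(\sqrt{\chi\psi})},\qquad z_1=\frac{1}{1-\psi q/(2+\psi)},\qquad D=\frac{(2+\psi)(2+\psi(1-q))}{2q}. \]
   Context: $\mathrm{GIG}(\psi,\chi,\theta)$ is the generalized inverse Gaussian distribution; for $N\sim\mathrm{Poisson}(\Lambda)$ with such $\Lambda$ the probability generating function of $N$ is \[ \varphi_N(z)=\frac{\psi^{\theta/2}}{K_\theta(\sqrt{\psi\chi})}(\psi+2-2z)^{-\theta/2}K_\theta\big(\sqrt{\chi(\psi+2-2z)}\big), \] where $K_\theta$ is the modified Bessel function of the second kind. $\mathrm{Geo}(1,q)$ is the shifted geometric distribution $\mathbb{P}[X=k]=q(1-q)^{k-1}$, $k\ge1$, with probability generating function $\varphi_X(z)=\frac{qz}{1-(1-q)z}$. The probability generating function of $L$ is $\varphi_N(\varphi_X(z))$. *)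

theory Defs
  imports "HOL-Probability.Probability"
begin

definition besselK :: "real \<Rightarrow> real \<Rightarrow> real" where
  "besselK \<nu> x = (1/2) * (LINT t:{0<..}|lborel. t powr (\<nu> - 1) * exp (- x / 2 * (t + 1 / t)))"

definition gig_density :: "real \<Rightarrow> real \<Rightarrow> real \<Rightarrow> real \<Rightarrow> real" where
  "gig_density \<psi> chi \<theta> x =
     (if x > 0 then (\<psi> / chi) powr (\<theta> / 2) / (2 * besselK \<theta> (sqrt (\<psi> * chi)))
        * x powr (\<theta> - 1) * exp (- (chi / x + \<psi> * x) / 2) else 0)"

definition mixed_poisson_gig :: "real \<Rightarrow> real \<Rightarrow> real \<Rightarrow> nat \<Rightarrow> real" where
  "mixed_poisson_gig \<psi> chi \<theta> k =
     (LINT l:{0<..}|lborel. pmf (poisson_pmf l) k * gig_density \<psi> chi \<theta> l)"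

text \<open>Shifted geometric distribution Geo(1,q): P[X = k] = q (1-q)^(k-1), k >= 1.\<close>
definition geo1_pmf :: "real \<Rightarrow> nat pmf" where
  "geo1_pmf q = map_pmf Suc (geometric_pmf q)"

fun geo1_sum_pmf :: "real \<Rightarrow> nat \<Rightarrow> nat pmf" where
  "geo1_sum_pmf q 0 = return_pmf 0"
| "geo1_sum_pmf q (Suc k) = bind_pmf (geo1_sum_pmf q k) (\<lambda>s. map_pmf (\<lambda>x. s + x) (geo1_pmf q))"

text \<open>a_n = P[L = n], L = X_1 + ... + X_N with N independent of the X_i
  (law of total probability over N).\<close>
definition compound_prob :: "real \<Rightarrow> real \<Rightarrow> real \<Rightarrow> real \<Rightarrow> nat \<Rightarrow> real" where
  "compound_prob \<psi> chi \<theta> q n = (\<Sum>k. mixed_poisson_gig \<psi> chi \<theta> k * pmf (geo1_sum_pmf q k) n)"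

end

theory Submission
  imports Defs "HOL-Real_Asymp.Real_Asymp"
begin

text \<open>
  Conditioning on \<open>N\<close>, \<open>a\<^sub>n = \<Sum>\<^sub>k P[N = k] P[X\<^sub>1 + \<dots> + X\<^sub>k = n]\<close>, and \<open>X\<^sub>1 + \<dots> + X\<^sub>k - k\<close>
  is negative binomial. With \<open>w = 1 + \<psi>/2\<close>, \<open>z = z\<^sub>1\<close> and \<open>p = 2q/(2 + \<psi> - \<psi>q)\<close> one has
  \<open>q = wp/z\<close> and \<open>1 - q = (1 - p)/z\<close>, which turns the sum into
  \<open>a\<^sub>m\<^sub>+\<^sub>1 = p z\<^sup>-\<^sup>m\<^sup>-\<^sup>1 E[g(1 + B\<^sub>m)]\<close> with \<open>B\<^sub>m ~ Bin(m, p)\<close> and \<open>g(k) = P[N = k] w\<^sup>k\<close>.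
  Up to a constant, \<open>k! P[N = k]\<close> is the Gamma-type integral of \<open>\<lambda>\<^sup>k\<^sup>+\<^sup>\<theta>\<^sup>-\<^sup>1 e\<^sup>-\<^sup>w\<^sup>\<lambda>\<close> damped by
  \<open>exp(-\<chi>/(2\<lambda>))\<close>; the damping is negligible where the mass sits, so \<open>g(k) \<sim> c k\<^sup>\<theta>\<^sup>-\<^sup>1\<close>.
  Finally \<open>B\<^sub>m\<close> concentrates at \<open>mp\<close> (Hoeffding), hence \<open>E[g(1 + B\<^sub>m)] \<sim> c (mp)\<^sup>\<theta>\<^sup>-\<^sup>1\<close>.
\<close>

lemma Gamma_plus1_pos: "x > 0 \<Longrightarrow> Gamma (x + 1) = x * Gamma (x :: real)"
  by (rule Gamma_plus1) auto

lemma exp_minus_diff_eq: "exp (- a - b) = exp (- a) * exp (- (b::real))"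
  by (simp add: exp_add[symmetric])

lemma powr_le_add_powr_of_bounds:
  fixes x lo hi a :: real
  assumes "0 < lo" and "lo \<le> x" and "x \<le> hi"
  shows "x powr a \<le> lo powr a + hi powr a"
proof (cases "a \<ge> 0")
  case True
  then have "x powr a \<le> hi powr a"
    using assms by (intro powr_mono2) auto
  then show ?thesis by (simp add: add_increasing)
next
  case False
  then have "x powr a \<le> lo powr a"
    using assms by (intro powr_mono2') auto
  then show ?thesis by (simp add: add_increasing2)
qed

lemma asymp_equiv_sequentially_Suc_iff:
  "(\<lambda>n. f (Suc n)) \<sim>[sequentially] (\<lambda>n. g (Suc n)) \<longleftrightarrow> f \<sim>[sequentially] g"
  unfolding asymp_equiv_def by (rule filterlim_sequentially_Suc)

lemma Gamma_plus_nat_asymp_equiv: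
  fixes \<theta> :: real
  assumes "\<theta> > 0"
  shows "(\<lambda>n. Gamma (real n + \<theta>)) \<sim>[sequentially] (\<lambda>n. fact n * real n powr (\<theta> - 1))"
proof (rule asymp_equivI')
  have "(\<lambda>n. Gamma \<theta> / Gamma_series \<theta> n * (real n / (real n + \<theta>))) \<longlonglongrightarrow> Gamma \<theta> / Gamma \<theta> * 1"
    by (intro tendsto_intros Gamma_series_LIMSEQ) (use Gamma_real_pos[OF assms] in simp, real_asymp)
  then have "(\<lambda>n. Gamma \<theta> / Gamma_series \<theta> n * (real n / (real n + \<theta>))) \<longlonglongrightarrow> 1"
    using Gamma_real_pos[OF assms] by simp
  moreover have "eventually (\<lambda>n. Gamma \<theta> / Gamma_series \<theta> n * (real n / (real n + \<theta>))
      = Gamma (real n + \<theta>) / (fact n * real n powr (\<theta> - 1))) sequentially"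
    using eventually_gt_at_top[of 0]
  proof eventually_elim
    case (elim n)
    have \<theta>: "\<theta> \<notin> \<int>\<^sub>\<le>\<^sub>0" using assms by auto
    then have "pochhammer \<theta> (Suc n) = Gamma (real n + \<theta> + 1) / Gamma \<theta>"
      by (simp add: pochhammer_Gamma add_ac)
    also have "Gamma (real n + \<theta> + 1) = (real n + \<theta>) * Gamma (real n + \<theta>)"
      using assms by (intro Gamma_plus1_pos) simp
    finally have "Gamma_series \<theta> n
        = fact n * (real n * real n powr (\<theta> - 1)) * Gamma \<theta> / ((real n + \<theta>) * Gamma (real n + \<theta>))"
      using elim by (simp add: Gamma_series_def powr_def left_diff_distrib exp_diff)
    then have "Gamma \<theta> / Gamma_series \<theta> n * (real n / (real n + \<theta>))
        = Gamma \<theta> * ((real n + \<theta>) * Gamma (real n + \<theta>))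
          / (fact n * (real n * real n powr (\<theta> - 1)) * Gamma \<theta>) * (real n / (real n + \<theta>))"
      by (simp only: divide_divide_eq_right)
    also have "\<dots> = Gamma (real n + \<theta>) / (fact n * real n powr (\<theta> - 1))"
      using assms elim Gamma_nonzero[OF \<theta>] by (simp add: divide_simps ac_simps)
    finally show ?case .
  qed
  ultimately show "(\<lambda>n. Gamma (real n + \<theta>) / (fact n * real n powr (\<theta> - 1))) \<longlonglongrightarrow> 1"
    by (rule Lim_transform_eventually)
qed

lemma has_bochner_integral_powr_exp:
  fixes s w :: real
  assumes "s > 0" and "w > 0"
  shows "has_bochner_integral lborel (\<lambda>l. indicator {0<..} l * (l powr (s - 1) * exp (- w * l)))
           (Gamma s / w powr s)"
proof -
  define f where "f t = indicator {0..} t * t powr (s - 1) / exp t" for t :: real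
  define g where "g l = indicator {0<..} l * (l powr (s - 1) * exp (- w * l))" for l :: real
  have [measurable]: "f \<in> borel_measurable borel" "g \<in> borel_measurable borel"
    unfolding f_def g_def by measurable
  have g_nonneg: "g l \<ge> 0" for l
    unfolding g_def by (simp add: indicator_def)
  have f_scaled: "f (w * l) = w powr (s - 1) * g l" for l
    using assms unfolding f_def g_def
    by (cases "l > 0") (auto simp: powr_mult exp_minus field_simps indicator_def zero_le_mult_iff)
  have "ennreal (Gamma s) = (\<integral>\<^sup>+l. ennreal (f l) \<partial>lborel)"
    using Gamma_conv_nn_integral_real[OF assms(1)] unfolding f_def by simp
  also have "\<dots> = ennreal w * (\<integral>\<^sup>+l. ennreal (w powr (s - 1)) * ennreal (g l) \<partial>lborel)"
    using assms g_nonneg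
    by (subst nn_integral_real_affine[of _ w 0]) (auto simp: f_scaled ennreal_mult g_nonneg)
  also have "\<dots> = ennreal (w powr s) * (\<integral>\<^sup>+l. ennreal (g l) \<partial>lborel)"
    using assms by (simp add: nn_integral_cmult ennreal_mult[symmetric] mult.assoc[symmetric] powr_diff)
  finally have Gamma_eq: "ennreal (Gamma s) = ennreal (w powr s) * (\<integral>\<^sup>+l. ennreal (g l) \<partial>lborel)" .
  have "(\<integral>\<^sup>+l. ennreal (g l) \<partial>lborel)
      = ennreal (1 / w powr s) * (ennreal (w powr s) * (\<integral>\<^sup>+l. ennreal (g l) \<partial>lborel))"
    using assms by (simp add: mult.assoc[symmetric] ennreal_mult[symmetric])
  also have "\<dots> = ennreal (Gamma s / w powr s)"
    unfolding Gamma_eq[symmetric] using assms by (simp add: ennreal_mult[symmetric])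
  finally show ?thesis
    using assms g_nonneg unfolding g_def[symmetric]
    by (intro has_bochner_integral_nn_integral) auto
qed

lemma
  fixes s w :: real
  assumes "s > 0" and "w > 0"
  shows set_integrable_powr_exp: "set_integrable lborel {0<..} (\<lambda>l. l powr (s - 1) * exp (- w * l))"
    and set_integral_powr_exp: "(LINT l:{0<..}|lborel. l powr (s - 1) * exp (- w * l)) = Gamma s / w powr s"
  using has_bochner_integral_powr_exp[OF assms]
  unfolding set_integrable_def set_lebesgue_integral_def has_bochner_integral_iff by auto

lemma Gamma_div_powr_diff_one:
  fixes s w :: real
  assumes "s > 1" and "w > 0"
  shows "Gamma (s - 1) / w powr (s - 1) = w / (s - 1) * (Gamma s / w powr s)"
proof -
  define t where "t = s - 1"
  have "t > 0" using assms by (simp add: t_def)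
  then have "Gamma (t + 1) = t * Gamma t"
    by (rule Gamma_plus1_pos)
  moreover have "w powr (t + 1) = w powr t * w"
    using assms by (simp add: powr_add)
  moreover have "s = t + 1" by (simp add: t_def)
  ultimately show ?thesis
    using \<open>t > 0\<close> assms by (simp add: field_simps)
qed

text \<open>For \<open>c, w > 0\<close> this is \<open>2 (c/w)\<^sup>s\<^sup>/\<^sup>2 K\<^sub>s(2\<surd>(wc))\<close> (substitute \<open>l = \<surd>(c/w) t\<close>).\<close>

definition gig_integral :: "real \<Rightarrow> real \<Rightarrow> real \<Rightarrow> real" where
  "gig_integral w c s = (LINT l:{0<..}|lborel. l powr (s - 1) * exp (- w * l - c / l))"

lemma gig_integral_bounds:
  fixes s w c :: real
  assumes "s > 1" and "w > 0" and "c \<ge> 0"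
  shows "(1 - c * w / (s - 1)) * (Gamma s / w powr s) \<le> gig_integral w c s"
    and "gig_integral w c s \<le> Gamma s / w powr s"
proof -
  let ?f = "\<lambda>s l. l powr (s - 1) * exp (- w * l)"
  have int_s: "set_integrable lborel {0<..} (?f s)"
    and int_s1: "set_integrable lborel {0<..} (?f (s - 1))"
    using assms set_integrable_powr_exp[of s w] set_integrable_powr_exp[of "s - 1" w] by auto
  have int: "set_integrable lborel {0<..} (\<lambda>l. l powr (s - 1) * exp (- w * l - c / l))"
  proof (rule set_integrable_bound[OF int_s])
    show "AE l in lborel. l \<in> {0<..} \<longrightarrow> norm (l powr (s - 1) * exp (- w * l - c / l)) \<le> norm (?f s l)"
      using assms by (intro AE_I2) (auto simp: exp_minus_diff_eq mult_left_le)
  qed (unfold set_borel_measurable_def, measurable)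
  have "(LINT l:{0<..}|lborel. ?f s l - c * ?f (s - 1) l) \<le> gig_integral w c s"
    unfolding gig_integral_def
  proof (rule set_integral_mono)
    show "set_integrable lborel {0<..} (\<lambda>l. ?f s l - c * ?f (s - 1) l)"
      using int_s int_s1 by (intro set_integral_diff set_integrable_mult_right)
    fix l :: real
    assume "l \<in> {0<..}"
    then have l: "l > 0" by simp
    have "?f s l - c * ?f (s - 1) l = ?f s l * (1 - c / l)"
      using l by (simp add: powr_diff right_diff_distrib power2_eq_square)
    also have "\<dots> \<le> ?f s l * exp (- c / l)"
      using exp_ge_add_one_self[of "- c / l"] by (intro mult_left_mono) auto
    finally show "?f s l - c * ?f (s - 1) l \<le> l powr (s - 1) * exp (- w * l - c / l)"
      by (simp add: exp_minus_diff_eq mult.assoc)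
  qed (fact int)
  moreover have "(LINT l:{0<..}|lborel. ?f s l - c * ?f (s - 1) l)
      = Gamma s / w powr s - c * (Gamma (s - 1) / w powr (s - 1))"
    using assms set_integral_powr_exp[of s w] set_integral_powr_exp[of "s - 1" w]
    by (subst set_integral_diff(2)[OF int_s set_integrable_mult_right[OF int_s1]])
      (simp add: set_integral_mult_right)
  moreover have "Gamma (s - 1) / w powr (s - 1) = w / (s - 1) * (Gamma s / w powr s)"
    using assms(1,2) by (rule Gamma_div_powr_diff_one)
  ultimately show "(1 - c * w / (s - 1)) * (Gamma s / w powr s) \<le> gig_integral w c s"
    by (simp add: algebra_simps)
  have "gig_integral w c s \<le> (LINT l:{0<..}|lborel. ?f s l)"
    unfolding gig_integral_def
    using assms by (intro set_integral_mono[OF int int_s]) (simp add: exp_minus_diff_eq mult_left_le)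
  then show "gig_integral w c s \<le> Gamma s / w powr s"
    using assms set_integral_powr_exp[of s w] by simp
qed

lemma gig_integral_asymp_equiv:
  fixes w c :: real
  assumes "w > 0" and "c \<ge> 0"
  shows "gig_integral w c \<sim>[at_top] (\<lambda>s. Gamma s / w powr s)"
proof (rule asymp_equivI', rule tendsto_sandwich)
  show "eventually (\<lambda>s. 1 - c * w / (s - 1) \<le> gig_integral w c s / (Gamma s / w powr s)) at_top"
    using eventually_gt_at_top[of 1]
  proof eventually_elim
    case (elim s)
    have "Gamma s / w powr s > 0" using elim assms by simp
    then show ?case
      using gig_integral_bounds(1)[OF elim assms] by (simp only: pos_le_divide_eq)
  qed
  show "eventually (\<lambda>s. gig_integral w c s / (Gamma s / w powr s) \<le> 1) at_top"
    using eventually_gt_at_top[of 1]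
  proof eventually_elim
    case (elim s)
    have "Gamma s / w powr s > 0" using elim assms by simp
    then show ?case
      using gig_integral_bounds(2)[OF elim assms] by (simp only: pos_divide_le_eq mult_1_left)
  qed
  show "((\<lambda>s. 1 - c * w / (s - 1)) \<longlongrightarrow> 1) at_top"
    by real_asymp
qed simp

lemma binomial_expectation_tendsto_0:
  fixes F :: "nat \<Rightarrow> nat \<Rightarrow> real" and B :: "nat \<Rightarrow> real" and p :: real
  assumes p: "0 \<le> p" "p \<le> 1"
    and bound: "\<And>m j. j \<le> m \<Longrightarrow> \<bar>F m j\<bar> \<le> B m"
    and subexponential: "\<And>c. c > 0 \<Longrightarrow> (\<lambda>m. B m * exp (- c * real m)) \<longlonglongrightarrow> 0"
    and concentrated: "\<And>\<epsilon>. \<epsilon> > 0 \<Longrightarrow> \<exists>\<delta>>0. eventually (\<lambda>m. \<forall>j\<le>m.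
                 \<bar>real j - real m * p\<bar> \<le> \<delta> * real m \<longrightarrow> \<bar>F m j\<bar> \<le> \<epsilon>) sequentially"
  shows "(\<lambda>m. measure_pmf.expectation (binomial_pmf m p) (F m)) \<longlonglongrightarrow> 0"
proof (rule tendstoI)
  fix \<epsilon> :: real
  assume \<epsilon>: "\<epsilon> > 0"
  then obtain \<delta> where \<delta>: "\<delta> > 0" and near: "eventually (\<lambda>m. \<forall>j\<le>m.
      \<bar>real j - real m * p\<bar> \<le> \<delta> * real m \<longrightarrow> \<bar>F m j\<bar> \<le> \<epsilon> / 2) sequentially"
    using concentrated[of "\<epsilon> / 2"] by auto
  have "(\<lambda>m. B m * exp (- (2 * \<delta>\<^sup>2) * real m)) \<longlonglongrightarrow> 0"
    using \<delta> by (intro subexponential) simp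
  then have small: "eventually (\<lambda>m. B m * exp (- (2 * \<delta>\<^sup>2) * real m) < \<epsilon> / 4) sequentially"
    using \<epsilon> by (intro order_tendstoD) auto
  show "eventually (\<lambda>m. dist (measure_pmf.expectation (binomial_pmf m p) (F m)) 0 < \<epsilon>) sequentially"
    using near small eventually_gt_at_top[of 0]
  proof eventually_elim
    case (elim m)
    define A where "A = {j. \<delta> * real m \<le> \<bar>real j - real m * p\<bar>}"
    have "B m \<ge> 0"
      using bound[of 0 m] by linarith
    have support: "j \<le> m" if "j \<in> set_pmf (binomial_pmf m p)" for j
      using that p by (auto simp: set_pmf_binomial_eq split: if_splits)
    have "\<bar>measure_pmf.expectation (binomial_pmf m p) (F m)\<bar>
        \<le> measure_pmf.expectation (binomial_pmf m p) (\<lambda>j. \<bar>F m j\<bar>)"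
      by (rule integral_abs_bound)
    also have "\<dots> \<le> measure_pmf.expectation (binomial_pmf m p) (\<lambda>j. \<epsilon> / 2 + B m * indicator A j)"
    proof (rule integral_mono_AE)
      show "AE j in binomial_pmf m p. \<bar>F m j\<bar> \<le> \<epsilon> / 2 + B m * indicator A j"
      proof (rule AE_pmfI)
        fix j assume "j \<in> set_pmf (binomial_pmf m p)"
        then have "j \<le> m" by (rule support)
        then show "\<bar>F m j\<bar> \<le> \<epsilon> / 2 + B m * indicator A j"
          using elim(1) bound[of j m] \<epsilon> \<open>B m \<ge> 0\<close> by (cases "j \<in> A") (auto simp: A_def)
      qed
    qed (use p in auto)
    also have "\<dots> = \<epsilon> / 2 + B m * measure_pmf.prob (binomial_pmf m p) A"
      using p by (simp add: integral_indicator)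
    also have "measure_pmf.prob (binomial_pmf m p) A \<le> 2 * exp (- 2 * (\<delta> * real m)\<^sup>2 / real m)"
      unfolding A_def using p \<delta> elim(3)
      by (intro binomial_distribution.prob_abs_ge) (auto simp: binomial_distribution_def)
    also have "2 * exp (- 2 * (\<delta> * real m)\<^sup>2 / real m) = 2 * exp (- (2 * \<delta>\<^sup>2) * real m)"
      using elim(3) by (simp add: power2_eq_square)
    finally show ?case
      using elim(2) \<open>B m \<ge> 0\<close> by (simp add: mult_left_mono)
  qed
qed

lemma powr_succ_div_mean_le:
  fixes a p :: real
  assumes "p > 0" and "j \<le> m"
  shows "((real j + 1) / (real m * p)) powr a \<le> (1 / (real m * p)) powr a + (2 / p) powr a"
proof (cases "m = 0")
  case False
  have "real j \<le> real m" "real m \<ge> 1"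
    using assms(2) False by simp_all
  then have "real j + 1 \<le> 2 / p * (real m * p)"
    using assms(1) by simp
  with False assms(1) show ?thesis
    by (intro powr_le_add_powr_of_bounds) (simp_all add: divide_right_mono pos_divide_le_eq)
qed simp

lemma mult_sub_one_abs_le:
  fixes h y \<epsilon> :: real
  assumes "y \<ge> 0" and "\<bar>h - 1\<bar> \<le> \<epsilon> / 4" and "\<bar>y - 1\<bar> \<le> min (\<epsilon> / 2) 1"
  shows "\<bar>h * y - 1\<bar> \<le> \<epsilon>"
proof -
  have "\<bar>h * y - 1\<bar> = \<bar>(h - 1) * y + (y - 1)\<bar>"
    by (simp add: algebra_simps)
  also have "\<dots> \<le> \<bar>h - 1\<bar> * y + \<bar>y - 1\<bar>"
    by (rule order_trans[OF abs_triangle_ineq]) (use assms(1) in \<open>simp add: abs_mult\<close>)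
  also have "\<dots> \<le> \<epsilon> / 4 * 2 + \<epsilon> / 2"
    using assms order_trans[OF abs_ge_zero assms(2)] by (intro add_mono mult_mono) auto
  finally show ?thesis by simp
qed

lemma abs_succ_div_sub_one_less:
  fixes j :: nat and \<mu> \<eta> :: real
  assumes "\<mu> > 0" and "\<eta> > 0" and "\<bar>real j - \<mu>\<bar> \<le> \<eta> / 2 * \<mu>" and "\<mu> \<ge> 4 / \<eta>"
  shows "\<bar>(real j + 1) / \<mu> - 1\<bar> < \<eta>"
proof -
  have "(real j + 1) / \<mu> - 1 = (real j - \<mu> + 1) / \<mu>"
    using assms(1) by (simp add: diff_divide_distrib add_divide_distrib)
  then have "\<bar>(real j + 1) / \<mu> - 1\<bar> = \<bar>real j - \<mu> + 1\<bar> / \<mu>"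
    using assms(1) by simp
  also have "\<dots> \<le> (\<eta> / 2 * \<mu> + 1) / \<mu>"
    using assms(1,3) by (intro divide_right_mono) linarith+
  also have "\<dots> < \<eta>"
    using assms(1,2,4) by (simp add: field_simps)
  finally show ?thesis .
qed

lemma eventually_near_mean_powr_ratio:
  fixes h :: "nat \<Rightarrow> real" and a p \<epsilon> :: real
  assumes "p > 0" and "h \<longlonglongrightarrow> 1" and "\<epsilon> > 0"
  shows "\<exists>\<delta>>0. eventually (\<lambda>m. \<forall>j\<le>m. \<bar>real j - real m * p\<bar> \<le> \<delta> * real m \<longrightarrow>
           \<bar>h (Suc j) * ((real j + 1) / (real m * p)) powr a - 1\<bar> \<le> \<epsilon>) sequentially"
proof -
  have "isCont (\<lambda>x::real. x powr a) 1"
    by (intro continuous_intros) simp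
  then obtain \<eta> where \<eta>: "\<eta> > 0"
    and powr_near_1: "\<And>x. \<bar>x - 1\<bar> < \<eta> \<Longrightarrow> \<bar>x powr a - 1\<bar> < min (\<epsilon> / 2) 1"
    using assms(3) unfolding continuous_at_eps_delta dist_real_def
    by (metis min_less_iff_conj powr_one_eq_one zero_less_divide_iff zero_less_numeral zero_less_one)
  obtain N where N: "\<And>k. k \<ge> N \<Longrightarrow> \<bar>h k - 1\<bar> < \<epsilon> / 4"
    using LIMSEQ_D[OF assms(2), of "\<epsilon> / 4"] assms(3) by auto
  define \<delta> where "\<delta> = p * min \<eta> 1 / 2"
  have "filterlim (\<lambda>m. real m * p) at_top sequentially"
    using assms(1) by real_asymp
  then have "eventually (\<lambda>m. 4 / \<eta> \<le> real m * p) sequentially"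
    and "eventually (\<lambda>m. 2 * real N \<le> real m * p) sequentially"
    by (simp_all add: filterlim_at_top)
  then have "eventually (\<lambda>m. \<forall>j\<le>m. \<bar>real j - real m * p\<bar> \<le> \<delta> * real m \<longrightarrow>
      \<bar>h (Suc j) * ((real j + 1) / (real m * p)) powr a - 1\<bar> \<le> \<epsilon>) sequentially"
  proof eventually_elim
    case (elim m)
    show ?case
    proof (intro allI impI)
      fix j assume "j \<le> m" and near: "\<bar>real j - real m * p\<bar> \<le> \<delta> * real m"
      have mp: "real m * p \<ge> 4 / \<eta>" "real m * p \<ge> 2 * real N"
        using elim by simp_all
      then have "real m * p > 0"
        using \<eta> by (smt (verit) divide_pos_pos)
      have "min \<eta> 1 * (real m * p) \<le> 1 * (real m * p)" "min \<eta> 1 * (real m * p) \<le> \<eta> * (real m * p)"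
        using \<open>real m * p > 0\<close> by (intro mult_right_mono; simp)+
      then have "\<delta> * real m \<le> real m * p / 2" "\<delta> * real m \<le> \<eta> / 2 * (real m * p)"
        by (simp_all add: \<delta>_def algebra_simps)
      then have "real (Suc j) \<ge> real N"
        using near mp by linarith
      then have h_near: "\<bar>h (Suc j) - 1\<bar> < \<epsilon> / 4"
        using N by simp
      have "\<bar>(real j + 1) / (real m * p) - 1\<bar> < \<eta>"
        using near \<open>\<delta> * real m \<le> \<eta> / 2 * (real m * p)\<close> \<open>real m * p > 0\<close> mp(1) \<eta>
        by (intro abs_succ_div_sub_one_less) auto
      then have "\<bar>((real j + 1) / (real m * p)) powr a - 1\<bar> < min (\<epsilon> / 2) 1"
        by (rule powr_near_1)
      with h_near show "\<bar>h (Suc j) * ((real j + 1) / (real m * p)) powr a - 1\<bar> \<le> \<epsilon>"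
        by (intro mult_sub_one_abs_le) auto
    qed
  qed
  moreover have "\<delta> > 0"
    using assms(1) \<eta> by (simp add: \<delta>_def)
  ultimately show ?thesis by blast
qed

lemma binomial_expectation_Suc_asymp_equiv:
  fixes g :: "nat \<Rightarrow> real" and a c p :: real
  assumes p: "0 < p" "p < 1" and "c \<noteq> 0"
    and g: "g \<sim>[sequentially] (\<lambda>k. c * real k powr a)"
  shows "(\<lambda>m. measure_pmf.expectation (binomial_pmf m p) (\<lambda>j. g (Suc j)))
           \<sim>[sequentially] (\<lambda>m. c * (real m * p) powr a)"
proof (rule asymp_equivI')
  define h where "h k = g k / (c * real k powr a)" for k
  define F where "F m j = h (Suc j) * ((real j + 1) / (real m * p)) powr a - 1" for m j
  have "eventually (\<lambda>k. (if g k = 0 \<and> c * real k powr a = 0 then 1 else g k / (c * real k powr a)) = h k)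
      sequentially"
    using eventually_gt_at_top[of 0] by eventually_elim (use \<open>c \<noteq> 0\<close> in \<open>simp add: h_def\<close>)
  with asymp_equivD[OF g] have h: "h \<longlonglongrightarrow> 1"
    by (rule Lim_transform_eventually)
  then obtain H where H: "H > 0" "\<And>k. \<bar>h k\<bar> \<le> H"
    using convergent_imp_Bseq[OF convergentI[OF h]] unfolding Bseq_def by auto
  define B where "B m = H * ((1 / (real m * p)) powr a + (2 / p) powr a) + 1" for m
  have F_bound: "\<bar>F m j\<bar> \<le> B m" if "j \<le> m" for m j
  proof -
    have "((real j + 1) / (real m * p)) powr a \<le> (1 / (real m * p)) powr a + (2 / p) powr a"
      using p(1) that by (rule powr_succ_div_mean_le)
    then have "\<bar>h (Suc j)\<bar> * ((real j + 1) / (real m * p)) powr a \<le> H * ((1 / (real m * p)) powr a + (2 / p) powr a)"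
      using H by (intro mult_mono) auto
    then have "\<bar>h (Suc j) * ((real j + 1) / (real m * p)) powr a\<bar> \<le> B m - 1"
      by (simp add: B_def abs_mult)
    then show ?thesis
      unfolding F_def using abs_triangle_ineq4[of "h (Suc j) * ((real j + 1) / (real m * p)) powr a" 1]
      by linarith
  qed
  have "(\<lambda>m. measure_pmf.expectation (binomial_pmf m p) (F m)) \<longlonglongrightarrow> 0"
  proof (rule binomial_expectation_tendsto_0)
    show "(\<lambda>m. B m * exp (- c' * real m)) \<longlonglongrightarrow> 0" if "c' > 0" for c'
      using p that unfolding B_def by real_asymp
    show "\<exists>\<delta>>0. eventually (\<lambda>m. \<forall>j\<le>m. \<bar>real j - real m * p\<bar> \<le> \<delta> * real m \<longrightarrow> \<bar>F m j\<bar> \<le> \<epsilon>) sequentially"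
      if "\<epsilon> > 0" for \<epsilon>
      unfolding F_def using eventually_near_mean_powr_ratio[OF p(1) h that] .
  qed (use p F_bound in auto)
  then have "(\<lambda>m. measure_pmf.expectation (binomial_pmf m p) (F m) + 1) \<longlonglongrightarrow> 0 + 1"
    by (intro tendsto_intros)
  moreover have "eventually (\<lambda>m. measure_pmf.expectation (binomial_pmf m p) (F m) + 1
      = measure_pmf.expectation (binomial_pmf m p) (\<lambda>j. g (Suc j)) / (c * (real m * p) powr a)) sequentially"
    using eventually_gt_at_top[of 0]
  proof eventually_elim
    case (elim m)
    have "g (Suc j) = c * (real m * p) powr a * (F m j + 1)" for j
      using elim p \<open>c \<noteq> 0\<close> by (simp add: F_def h_def powr_divide add.commute)
    moreover have "p \<in> {0..1}"
      using p by simp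
    ultimately show ?case
      using elim p \<open>c \<noteq> 0\<close>
      by (simp add: Bochner_Integration.integral_add)
  qed
  ultimately show "(\<lambda>m. measure_pmf.expectation (binomial_pmf m p) (\<lambda>j. g (Suc j)) / (c * (real m * p) powr a))
      \<longlonglongrightarrow> 1"
    by (simp add: Lim_transform_eventually)
qed

lemma geo1_sum_pmf_eq_map_neg_binomial:
  "geo1_sum_pmf q k = map_pmf (\<lambda>x. x + k) (neg_binomial_pmf k q)"
proof (induction k)
  case (Suc k)
  show ?case
    unfolding geo1_sum_pmf.simps Suc geo1_pmf_def neg_binomial_pmf_Suc
    by (simp add: map_pmf_def pair_pmf_def bind_assoc_pmf bind_return_pmf bind_return_pmf'
        bind_commute_pmf[of "geometric_pmf q"] algebra_simps)
qed simp

lemma pmf_geo1_sum_pmf: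
  assumes "0 < q" and "q \<le> 1"
  shows "pmf (geo1_sum_pmf q k) n =
           (if k \<le> n then real ((n - 1) choose (n - k)) * q ^ k * (1 - q) ^ (n - k) else 0)"
proof (cases "k \<le> n")
  case True
  have "pmf (geo1_sum_pmf q k) n = pmf (map_pmf (\<lambda>x. x + k) (neg_binomial_pmf k q)) ((n - k) + k)"
    using True by (simp add: geo1_sum_pmf_eq_map_neg_binomial)
  also have "\<dots> = pmf (neg_binomial_pmf k q) (n - k)"
    by (rule pmf_map_inj') (simp add: inj_def)
  also have "\<dots> = real ((n - 1) choose (n - k)) * q ^ k * (1 - q) ^ (n - k)"
    using True assms by (simp add: pmf_neg_binomial)
  finally show ?thesis
    using True by simp
next
  case False
  then show ?thesis
    unfolding geo1_sum_pmf_eq_map_neg_binomial by (auto simp: pmf_eq_0_set_pmf)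
qed

lemma compound_prob_eq_sum:
  assumes "0 < q" and "q \<le> 1"
  shows "compound_prob \<psi> chi \<theta> q n = (\<Sum>k\<le>n. mixed_poisson_gig \<psi> chi \<theta> k * pmf (geo1_sum_pmf q k) n)"
  unfolding compound_prob_def
  by (rule suminf_finite) (use assms in \<open>auto simp: pmf_geo1_sum_pmf\<close>)

lemma sum_pmf_geo1_sum_Suc_eq_binomial_expectation:
  fixes \<mu> :: "nat \<Rightarrow> real"
  assumes "0 < q" "q \<le> 1" "0 \<le> p" "p \<le> 1"
    and "q = w * p / z" and "1 - q = (1 - p) / z"
  shows "(\<Sum>k\<le>Suc m. \<mu> k * pmf (geo1_sum_pmf q k) (Suc m))
           = p / z ^ Suc m * measure_pmf.expectation (binomial_pmf m p) (\<lambda>j. \<mu> (Suc j) * w ^ Suc j)"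
proof -
  have z: "z \<noteq> 0"
    using assms by auto
  have "\<mu> (Suc j) * pmf (geo1_sum_pmf q (Suc j)) (Suc m)
      = p / z ^ Suc m * (real (m choose j) * p ^ j * (1 - p) ^ (m - j) * (\<mu> (Suc j) * w ^ Suc j))"
    if "j \<le> m" for j
  proof -
    have "z ^ Suc m = z ^ Suc j * z ^ (m - j)"
      using that by (simp flip: power_add)
    moreover have "q ^ Suc j = (w * p) ^ Suc j / z ^ Suc j"
      using assms(5) by (simp add: power_divide)
    moreover have "(1 - q) ^ (m - j) = (1 - p) ^ (m - j) / z ^ (m - j)"
      using assms(6) by (simp add: power_divide)
    moreover have "pmf (geo1_sum_pmf q (Suc j)) (Suc m) = real (m choose j) * q ^ Suc j * (1 - q) ^ (m - j)"
      using that pmf_geo1_sum_pmf[OF assms(1,2), of "Suc j" "Suc m"]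
      by (simp add: binomial_symmetric[OF that] del: geo1_sum_pmf.simps)
    ultimately show ?thesis
      using z by (simp add: power_mult_distrib field_simps del: geo1_sum_pmf.simps)
  qed
  then have "(\<Sum>k\<le>Suc m. \<mu> k * pmf (geo1_sum_pmf q k) (Suc m))
      = (\<Sum>j\<le>m. p / z ^ Suc m * (real (m choose j) * p ^ j * (1 - p) ^ (m - j) * (\<mu> (Suc j) * w ^ Suc j)))"
    by (subst sum.atMost_Suc_shift) simp
  also have "\<dots> = p / z ^ Suc m * measure_pmf.expectation (binomial_pmf m p) (\<lambda>j. \<mu> (Suc j) * w ^ Suc j)"
    using assms(3,4) by (simp add: expectation_binomial_pmf' sum_distrib_left)
  finally show ?thesis .
qed

lemma mixed_poisson_gig_eq:
  "mixed_poisson_gig \<psi> chi \<theta> k =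
     (\<psi> / chi) powr (\<theta> / 2) / (2 * besselK \<theta> (sqrt (\<psi> * chi))) / fact k
       * gig_integral ((2 + \<psi>) / 2) (chi / 2) (real k + \<theta>)"
proof -
  define K where "K = (\<psi> / chi) powr (\<theta> / 2) / (2 * besselK \<theta> (sqrt (\<psi> * chi)))"
  have "pmf (poisson_pmf l) k * gig_density \<psi> chi \<theta> l
      = K / fact k * (l powr (real k + \<theta> - 1) * exp (- ((2 + \<psi>) / 2) * l - chi / 2 / l))"
    if "l > 0" for l
  proof -
    have "l ^ k * l powr (\<theta> - 1) = l powr (real k + \<theta> - 1)"
      using that by (simp add: powr_add powr_realpow[symmetric] add_diff_eq[symmetric])
    moreover have "exp (- l) * exp (- (chi / l + \<psi> * l) / 2) = exp (- ((2 + \<psi>) / 2) * l - chi / 2 / l)"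
      by (simp add: exp_add[symmetric] field_simps)
    ultimately show ?thesis
      using that unfolding gig_density_def K_def
      by (simp add: ac_simps)
  qed
  then have "mixed_poisson_gig \<psi> chi \<theta> k
      = (LINT l:{0<..}|lborel. K / fact k * (l powr (real k + \<theta> - 1) * exp (- ((2 + \<psi>) / 2) * l - chi / 2 / l)))"
    unfolding mixed_poisson_gig_def by (intro set_lebesgue_integral_cong) auto
  then show ?thesis
    unfolding gig_integral_def K_def by (simp add: set_integral_mult_right)
qed

lemma mixed_poisson_gig_tilted_asymp_equiv:
  fixes \<psi> chi \<theta> :: real
  assumes "\<psi> > 0" and "chi \<ge> 0" and "\<theta> > 0"
  defines "w \<equiv> (2 + \<psi>) / 2"
  shows "(\<lambda>k. mixed_poisson_gig \<psi> chi \<theta> k * w ^ k) \<sim>[sequentially]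
           (\<lambda>k. (\<psi> / chi) powr (\<theta> / 2) / (2 * besselK \<theta> (sqrt (\<psi> * chi))) * w powr (- \<theta>)
                 * real k powr (\<theta> - 1))"
proof -
  define K where "K = (\<psi> / chi) powr (\<theta> / 2) / (2 * besselK \<theta> (sqrt (\<psi> * chi)))"
  have w: "w > 0" using assms by simp
  have "filterlim (\<lambda>k. real k + \<theta>) at_top sequentially"
    by real_asymp
  then have "(\<lambda>k. gig_integral w (chi / 2) (real k + \<theta>))
      \<sim>[sequentially] (\<lambda>k. Gamma (real k + \<theta>) / w powr (real k + \<theta>))"
    using assms w by (intro asymp_equiv_compose'[OF gig_integral_asymp_equiv]) auto
  also have "\<dots> \<sim>[sequentially] (\<lambda>k. fact k * real k powr (\<theta> - 1) / w powr (real k + \<theta>))"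
    by (intro asymp_equiv_intros Gamma_plus_nat_asymp_equiv assms)
  finally have "(\<lambda>k. K / fact k * w ^ k * gig_integral w (chi / 2) (real k + \<theta>))
      \<sim>[sequentially] (\<lambda>k. K / fact k * w ^ k * (fact k * real k powr (\<theta> - 1) / w powr (real k + \<theta>)))"
    by (intro asymp_equiv_intros)
  moreover have "K / fact k * w ^ k * (fact k * real k powr (\<theta> - 1) / w powr (real k + \<theta>))
      = K * w powr (- \<theta>) * real k powr (\<theta> - 1)" for k
    using w by (simp add: powr_add powr_realpow powr_minus field_simps)
  ultimately show ?thesis
    unfolding mixed_poisson_gig_eq K_def[symmetric] w_def[symmetric] by (simp add: ac_simps)
qed

lemma tilting_parameters:
  fixes \<psi> q :: real
  assumes "\<psi> > 0" and "0 < q" and "q < 1"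
  defines "w \<equiv> (2 + \<psi>) / 2"
      and "z \<equiv> (2 + \<psi>) / (2 + \<psi> - \<psi> * q)"
      and "p \<equiv> 2 * q / (2 + \<psi> - \<psi> * q)"
  shows "0 < p" and "p < 1" and "z > 0" and "q = w * p / z" and "1 - q = (1 - p) / z"
proof -
  define d where "d = 2 + \<psi> - \<psi> * q"
  have "q * (2 + \<psi>) < 2 + \<psi>"
    using assms(1,3) by simp
  then have "2 * q < d"
    by (simp add: d_def algebra_simps)
  moreover have "p = 2 * q / d" "z = (2 + \<psi>) / d"
    by (simp_all add: z_def p_def d_def)
  moreover have "1 - p = (2 + \<psi>) * (1 - q) / d"
    using \<open>2 * q < d\<close> assms(2) by (simp add: \<open>p = 2 * q / d\<close> field_simps) (simp add: d_def algebra_simps)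
  ultimately show "0 < p" "p < 1" "z > 0" "q = w * p / z" "1 - q = (1 - p) / z"
    using assms(1,2) by (simp_all add: w_def)
qed

lemma compound_prob_asymp_equiv:
  fixes \<psi> chi \<theta> q :: real
  assumes "\<psi> > 0" and "chi > 0" and "\<theta> > 0" and "0 < q" and "q < 1"
    and "besselK \<theta> (sqrt (\<psi> * chi)) \<noteq> 0"
  defines "K \<equiv> (\<psi> / chi) powr (\<theta> / 2) / (2 * besselK \<theta> (sqrt (\<psi> * chi)))"
      and "w \<equiv> (2 + \<psi>) / 2"
      and "z \<equiv> (2 + \<psi>) / (2 + \<psi> - \<psi> * q)"
      and "p \<equiv> 2 * q / (2 + \<psi> - \<psi> * q)"
  shows "compound_prob \<psi> chi \<theta> q \<sim>[sequentially]
           (\<lambda>n. K * w powr (- \<theta>) * p powr \<theta> * real n powr (\<theta> - 1) * z powr (- real n))"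
proof -
  have p: "0 < p" "p < 1" and "z > 0" and q: "q = w * p / z" "1 - q = (1 - p) / z"
    unfolding w_def z_def p_def by (rule tilting_parameters[OF assms(1,4,5)])+
  have "K \<noteq> 0" "w > 0"
    using assms(1,2,6) by (simp_all add: K_def w_def)
  let ?E = "\<lambda>m. measure_pmf.expectation (binomial_pmf m p) (\<lambda>j. mixed_poisson_gig \<psi> chi \<theta> (Suc j) * w ^ Suc j)"
  have "compound_prob \<psi> chi \<theta> q (Suc m) = p / z ^ Suc m * ?E m" for m
    unfolding compound_prob_eq_sum[OF assms(4) less_imp_le[OF assms(5)]]
    by (rule sum_pmf_geo1_sum_Suc_eq_binomial_expectation) (use assms(4,5) p q in auto)
  moreover have "?E \<sim>[sequentially] (\<lambda>m. K * w powr (- \<theta>) * (real m * p) powr (\<theta> - 1))"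
    using mixed_poisson_gig_tilted_asymp_equiv[of \<psi> chi \<theta>] assms(1-3) \<open>K \<noteq> 0\<close> \<open>w > 0\<close>
    unfolding K_def w_def by (intro binomial_expectation_Suc_asymp_equiv p) simp_all
  ultimately have "(\<lambda>m. compound_prob \<psi> chi \<theta> q (Suc m))
      \<sim>[sequentially] (\<lambda>m. p / z ^ Suc m * (K * w powr (- \<theta>) * (real m * p) powr (\<theta> - 1)))"
    by (simp add: asymp_equiv_intros)
  also have "(\<lambda>m. p / z ^ Suc m * (K * w powr (- \<theta>) * (real m * p) powr (\<theta> - 1)))
      = (\<lambda>m. K * w powr (- \<theta>) * p powr \<theta> * z powr (- real (Suc m)) * real m powr (\<theta> - 1))"
    using p \<open>z > 0\<close> powr_add[of p 1 "\<theta> - 1"]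
    by (simp add: powr_mult powr_minus powr_realpow field_simps del: of_nat_Suc)
  also have "\<dots> \<sim>[sequentially]
      (\<lambda>m. K * w powr (- \<theta>) * p powr \<theta> * z powr (- real (Suc m)) * real (Suc m) powr (\<theta> - 1))"
    by (rule asymp_equiv_mult[OF asymp_equiv_refl]) real_asymp
  finally show ?thesis
    by (subst asymp_equiv_sequentially_Suc_iff[symmetric]) (simp add: ac_simps del: of_nat_Suc)
qed

lemma compound_prob_eq_0_if_besselK_eq_0:
  assumes "0 < q" and "q \<le> 1" and "besselK \<theta> (sqrt (\<psi> * chi)) = 0"
  shows "compound_prob \<psi> chi \<theta> q n = 0"
proof -
  have "mixed_poisson_gig \<psi> chi \<theta> k = 0" for k
    using assms(3) by (simp add: mixed_poisson_gig_eq)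
  then show ?thesis
    using assms(1,2) by (simp add: compound_prob_eq_sum)
qed

theorem proposition3:
  fixes \<psi> chi \<theta> q :: real
  assumes "\<psi> > 0" and "chi > 0" and "\<theta> > 0" and "0 < q" and "q < 1"
  defines "C \<equiv> \<psi> powr (\<theta> / 2) / besselK \<theta> (sqrt (chi * \<psi>))"
      and "z1 \<equiv> 1 / (1 - \<psi> * q / (2 + \<psi>))"
      and "D \<equiv> (2 + \<psi>) * (2 + \<psi> * (1 - q)) / (2 * q)"
  shows "(\<lambda>n. compound_prob \<psi> chi \<theta> q n) \<sim>[sequentially]
           (\<lambda>n. C * chi powr (- \<theta> / 2) * D powr (- \<theta>) * (2 * real n) powr (\<theta> - 1)
                 * z1 powr (- real n))"
proof (cases "besselK \<theta> (sqrt (\<psi> * chi)) = 0")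
  case True
  then have "C = 0"
    by (simp add: C_def mult.commute[of chi])
  with True show ?thesis
    using assms(4,5) by (simp add: compound_prob_eq_0_if_besselK_eq_0)
next
  case False
  define K where "K = (\<psi> / chi) powr (\<theta> / 2) / (2 * besselK \<theta> (sqrt (\<psi> * chi)))"
  define w where "w = (2 + \<psi>) / 2"
  define d where "d = 2 + \<psi> - \<psi> * q"
  define p where "p = 2 * q / d"
  have "p > 0" "(2 + \<psi>) / d > 0"
    using tilting_parameters(1,3)[OF assms(1,4,5)] by (simp_all add: p_def d_def)
  then have "d > 0" "w > 0"
    using assms(1) by (simp_all add: w_def zero_less_divide_iff)
  then have "z1 = (2 + \<psi>) / d" "D = 2 * w / p" "C * chi powr (- \<theta> / 2) = 2 * K"
    using assms(1,2) \<open>p > 0\<close>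
    by (simp_all add: z1_def D_def C_def K_def w_def p_def d_def field_simps powr_divide
        powr_minus real_sqrt_mult)
  moreover have "(2 * w / p) powr (- \<theta>) = w powr (- \<theta>) * p powr \<theta> / 2 powr \<theta>"
    using \<open>w > 0\<close> \<open>p > 0\<close> by (simp add: powr_divide powr_mult powr_minus divide_inverse inverse_powr)
  ultimately have "C * chi powr (- \<theta> / 2) * D powr (- \<theta>) * (2 * real n) powr (\<theta> - 1) * z1 powr (- real n)
      = K * w powr (- \<theta>) * p powr \<theta> * real n powr (\<theta> - 1) * ((2 + \<psi>) / d) powr (- real n)" for n
    by (simp add: powr_mult powr_diff)
  with compound_prob_asymp_equiv[OF assms(1-5) False] show ?thesis
    unfolding K_def w_def p_def d_def by simp
qed

end
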